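(* Let $N$ be a near-ring. Then a subset $P\subseteq N$ is an equivalence class of some congruence on $N$ if and only if $P$ is a paragon in $\mathrm{T}(N)$.
   Context: A near-ring is $(N,+,\cdot)$ with $(N,+)$ a group, $\cdot$ associative, and $n(m+m')=nm+nm'$. A congruence on $N$ is an equivalence relation compatible with $+$ and $\cdot$. $\mathrm{T}(N)$ is the set $N$ with ternary operation $[a,b,c]=a-b+c$ and the multiplication of $N$. A heap is a set with a ternary operation satisfying $[a_1,a_2,[a_3,a_4,a_5]]=[[a_1,a_2,a_3],a_4,a_5]$ and $[a,a,b]=b=[b,a,a]$. A normal sub-heap is a non-empty subset $S$ closed under $[-,-,-]$ with $[[a,e,s],a,e]\in S$ for all $a$ and $e,s\in S$; $a\sim_S b$ iff $[a,b,s]\in S$ for some (equivalently all) $s\in S$. A sub-heap $S$ is closed if $[ts',ts,s]\in S$ and $[s't,st,s]\in S$ for all $s,s'\in S$, $t$. A paragon is a non-empty normal sub-heap $P$ all of whose $\sim_P$-classes are closed sub-heaps. *)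

theory Defs
  imports Main
begin

class near_ring = group_add + semigroup_mult +
  assumes near_ring_distrib_left: "n * (m + m') = n * m + n * m'"

definition nr_congruence :: "('a::near_ring) rel \<Rightarrow> bool" where
  "nr_congruence R \<longleftrightarrow> equiv UNIV R \<and>
     (\<forall>a b c d. (a, b) \<in> R \<longrightarrow> (c, d) \<in> R \<longrightarrow> (a + c, b + d) \<in> R \<and> (a * c, b * d) \<in> R)"

definition normal_subheap :: "('a \<Rightarrow> 'a \<Rightarrow> 'a \<Rightarrow> 'a) \<Rightarrow> 'a set \<Rightarrow> bool" where
  "normal_subheap tern S \<longleftrightarrow> S \<noteq> {} \<and>
     (\<forall>a\<in>S. \<forall>b\<in>S. \<forall>c\<in>S. tern a b c \<in> S) \<and>
     (\<forall>a. \<forall>e\<in>S. \<forall>s\<in>S. tern (tern a e s) a e \<in> S)"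

definition heap_sim :: "('a \<Rightarrow> 'a \<Rightarrow> 'a \<Rightarrow> 'a) \<Rightarrow> 'a set \<Rightarrow> 'a \<Rightarrow> 'a \<Rightarrow> bool" where
  "heap_sim tern S a b \<longleftrightarrow> (\<exists>s\<in>S. tern a b s \<in> S)"

definition subheap :: "('a \<Rightarrow> 'a \<Rightarrow> 'a \<Rightarrow> 'a) \<Rightarrow> 'a set \<Rightarrow> bool" where
  "subheap tern S \<longleftrightarrow> (\<forall>a\<in>S. \<forall>b\<in>S. \<forall>c\<in>S. tern a b c \<in> S)"

definition closed_subheap ::
    "('a \<Rightarrow> 'a \<Rightarrow> 'a \<Rightarrow> 'a) \<Rightarrow> ('a \<Rightarrow> 'a \<Rightarrow> 'a) \<Rightarrow> 'a set \<Rightarrow> bool" where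
  "closed_subheap tern mult S \<longleftrightarrow> subheap tern S \<and>
     (\<forall>s\<in>S. \<forall>s'\<in>S. \<forall>t. tern (mult t s') (mult t s) s \<in> S \<and> tern (mult s' t) (mult s t) s \<in> S)"

definition paragon ::
    "('a \<Rightarrow> 'a \<Rightarrow> 'a \<Rightarrow> 'a) \<Rightarrow> ('a \<Rightarrow> 'a \<Rightarrow> 'a) \<Rightarrow> 'a set \<Rightarrow> bool" where
  "paragon tern mult P \<longleftrightarrow> normal_subheap tern P \<and>
     (\<forall>a. closed_subheap tern mult {b. heap_sim tern P a b})"

text \<open>The truss T(N): ternary operation [a,b,c] = a - b + c, with the multiplication of N.\<close>
definition T_tern :: "'a::near_ring \<Rightarrow> 'a \<Rightarrow> 'a \<Rightarrow> 'a" where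
  "T_tern a b c = a - b + c"

end

theory Submission
  imports Defs
begin

text \<open>
A congruence class P of a near-ring N is a paragon of T(N) because the heap operation and the
multiplication respect the congruence, and the \<open>\<sim>\<^sub>P\<close>-classes are again congruence classes.
Conversely, for a paragon P and a fixed p \<in> P, the translate K = P - p is a normal subgroup of
(N,+) (normality of the sub-heap), so a - b \<in> K defines an additive congruence whose classes are
the \<open>\<sim>\<^sub>P\<close>-classes; closedness of these classes says precisely that ts - ts' and st - s't lie in
K whenever s - s' does, so the relation is also multiplicative, and P is its class of p.
\<close>

lemmas group_add_expand = diff_conv_add_uminus minus_add add.assoc

lemma T_tern_expand: "T_tern a b c = a + - b + c"
  by (simp add: T_tern_def)

lemma nr_congruence_refl: "nr_congruence R \<Longrightarrow> (a, a) \<in> R"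
  unfolding nr_congruence_def equiv_def refl_on_def by blast

lemma nr_congruence_sym: "nr_congruence R \<Longrightarrow> (a, b) \<in> R \<Longrightarrow> (b, a) \<in> R"
  unfolding nr_congruence_def equiv_def sym_def by blast

lemma nr_congruence_trans: "nr_congruence R \<Longrightarrow> (a, b) \<in> R \<Longrightarrow> (b, c) \<in> R \<Longrightarrow> (a, c) \<in> R"
  unfolding nr_congruence_def equiv_def trans_def by blast

lemma nr_congruence_add: "nr_congruence R \<Longrightarrow> (a, b) \<in> R \<Longrightarrow> (c, d) \<in> R \<Longrightarrow> (a + c, b + d) \<in> R"
  unfolding nr_congruence_def by blast

lemma nr_congruence_mult: "nr_congruence R \<Longrightarrow> (a, b) \<in> R \<Longrightarrow> (c, d) \<in> R \<Longrightarrow> (a * c, b * d) \<in> R"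
  unfolding nr_congruence_def by blast

lemma nr_congruence_uminus:
  assumes R: "nr_congruence R" and ab: "(a, b) \<in> R"
  shows "(- a, - b) \<in> R"
proof -
  have "(- a + a + - b, - a + b + - b) \<in> R"
    by (intro nr_congruence_add[OF R] nr_congruence_refl[OF R] ab)
  then have "(- b, - a) \<in> R"
    by (simp add: add.assoc)
  then show ?thesis
    by (rule nr_congruence_sym[OF R])
qed

lemma nr_congruence_T_tern:
  assumes R: "nr_congruence R" and "(a, a') \<in> R" "(b, b') \<in> R" "(c, c') \<in> R"
  shows "(T_tern a b c, T_tern a' b' c') \<in> R"
  unfolding T_tern_expand by (intro nr_congruence_add[OF R] nr_congruence_uminus[OF R] assms)

lemma nr_congruence_class_iff:
  "nr_congruence R \<Longrightarrow> (x, a) \<in> R \<Longrightarrow> b \<in> R `` {a} \<longleftrightarrow> (x, b) \<in> R"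
  using nr_congruence_sym nr_congruence_trans by blast

lemma nr_congruence_class_T_tern:
  assumes R: "nr_congruence R" and "a \<in> R `` {x}" "b \<in> R `` {x}" "c \<in> R `` {x}"
  shows "T_tern a b c \<in> R `` {x}"
proof -
  have "(T_tern x x x, T_tern a b c) \<in> R"
    using assms by (intro nr_congruence_T_tern[OF R]) auto
  then show ?thesis
    by (simp add: T_tern_def)
qed

lemma heap_sim_nr_congruence_class:
  assumes R: "nr_congruence R"
  shows "heap_sim T_tern (R `` {x}) a b \<longleftrightarrow> (a, b) \<in> R"
proof
  assume "heap_sim T_tern (R `` {x}) a b"
  then obtain s where "(x, s) \<in> R" "(x, T_tern a b s) \<in> R"
    unfolding heap_sim_def by auto
  then have "(T_tern a b s, s) \<in> R"
    using R nr_congruence_class_iff by fastforce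
  then have "(T_tern (T_tern a b s) s b, T_tern s s b) \<in> R"
    by (intro nr_congruence_T_tern[OF R] nr_congruence_refl[OF R])
  then show "(a, b) \<in> R"
    by (simp add: T_tern_expand add.assoc)
next
  assume "(a, b) \<in> R"
  then have "(T_tern a b x, T_tern b b x) \<in> R"
    by (intro nr_congruence_T_tern[OF R] nr_congruence_refl[OF R])
  then have "T_tern a b x \<in> R `` {x}"
    using nr_congruence_sym[OF R] by (simp add: T_tern_def)
  moreover have "x \<in> R `` {x}"
    using nr_congruence_refl[OF R] by blast
  ultimately show "heap_sim T_tern (R `` {x}) a b"
    unfolding heap_sim_def by blast
qed

lemma closed_subheap_nr_congruence_class:
  assumes R: "nr_congruence R"
  shows "closed_subheap T_tern (*) (R `` {x})"
  unfolding closed_subheap_def subheap_def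
proof (intro conjI ballI allI)
  fix a b c assume "a \<in> R `` {x}" "b \<in> R `` {x}" "c \<in> R `` {x}"
  then show "T_tern a b c \<in> R `` {x}"
    by (rule nr_congruence_class_T_tern[OF R])
next
  fix s s' t assume s: "s \<in> R `` {x}" and s': "s' \<in> R `` {x}"
  then have ss: "(s', s) \<in> R"
    using R nr_congruence_class_iff by fastforce
  have "(T_tern (t * s') (t * s) s, T_tern (t * s) (t * s) s) \<in> R"
    and "(T_tern (s' * t) (s * t) s, T_tern (s * t) (s * t) s) \<in> R"
    by (intro nr_congruence_T_tern[OF R] nr_congruence_refl[OF R] nr_congruence_mult[OF R] ss)+
  then have "(T_tern (t * s') (t * s) s, s) \<in> R" "(T_tern (s' * t) (s * t) s, s) \<in> R"
    by (simp_all add: T_tern_def)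
  with s show "T_tern (t * s') (t * s) s \<in> R `` {x}" "T_tern (s' * t) (s * t) s \<in> R `` {x}"
    using nr_congruence_sym[OF R] nr_congruence_trans[OF R] by blast+
qed

lemma paragon_nr_congruence_class:
  assumes R: "nr_congruence R"
  shows "paragon T_tern (*) (R `` {x})"
  unfolding paragon_def
proof (intro conjI allI)
  show "normal_subheap T_tern (R `` {x})"
    unfolding normal_subheap_def
  proof (intro conjI ballI allI)
    show "R `` {x} \<noteq> {}"
      using nr_congruence_refl[OF R] by blast
  next
    fix a b c assume "a \<in> R `` {x}" "b \<in> R `` {x}" "c \<in> R `` {x}"
    then show "T_tern a b c \<in> R `` {x}"
      by (rule nr_congruence_class_T_tern[OF R])
  next
    fix a e s assume e: "e \<in> R `` {x}" and s: "s \<in> R `` {x}"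
    then have "(s, e) \<in> R"
      using R nr_congruence_class_iff by fastforce
    then have "(T_tern (T_tern a e s) a e, T_tern (T_tern a e e) a e) \<in> R"
      by (intro nr_congruence_T_tern[OF R] nr_congruence_refl[OF R])
    then have "(T_tern (T_tern a e s) a e, e) \<in> R"
      by (simp add: T_tern_def)
    with e show "T_tern (T_tern a e s) a e \<in> R `` {x}"
      using nr_congruence_sym[OF R] nr_congruence_trans[OF R] by blast
  qed
next
  fix a
  have "{b. heap_sim T_tern (R `` {x}) a b} = R `` {a}"
    using heap_sim_nr_congruence_class[OF R] by auto
  then show "closed_subheap T_tern (*) {b. heap_sim T_tern (R `` {x}) a b}"
    using closed_subheap_nr_congruence_class[OF R] by simp
qed

definition normal_add_subgroup :: "'a::group_add set \<Rightarrow> bool" where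
  "normal_add_subgroup K \<longleftrightarrow> 0 \<in> K \<and> (\<forall>x\<in>K. \<forall>y\<in>K. x - y \<in> K) \<and> (\<forall>g. \<forall>k\<in>K. g + k - g \<in> K)"

definition coset_rel :: "'a::group_add set \<Rightarrow> 'a rel" where
  "coset_rel K = {(a, b). a - b \<in> K}"

context
  fixes K :: "'a::group_add set"
  assumes K: "normal_add_subgroup K"
begin

lemma normal_add_subgroup_zero: "0 \<in> K"
  using K unfolding normal_add_subgroup_def by blast

lemma normal_add_subgroup_diff: "x \<in> K \<Longrightarrow> y \<in> K \<Longrightarrow> x - y \<in> K"
  using K unfolding normal_add_subgroup_def by blast

lemma normal_add_subgroup_conj: "k \<in> K \<Longrightarrow> g + k - g \<in> K"
  using K unfolding normal_add_subgroup_def by blast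

lemma normal_add_subgroup_uminus: "x \<in> K \<Longrightarrow> - x \<in> K"
  using normal_add_subgroup_diff[OF normal_add_subgroup_zero] by fastforce

lemma normal_add_subgroup_add: "x \<in> K \<Longrightarrow> y \<in> K \<Longrightarrow> x + y \<in> K"
  using normal_add_subgroup_diff[of x "- y"] normal_add_subgroup_uminus by simp

lemma equiv_coset_rel: "equiv UNIV (coset_rel K)"
proof (rule equivI)
  show "coset_rel K \<subseteq> UNIV \<times> UNIV"
    by simp
  show "refl_on UNIV (coset_rel K)"
    by (rule refl_onI) (simp_all add: coset_rel_def normal_add_subgroup_zero)
  show "sym (coset_rel K)"
    by (rule symI) (metis coset_rel_def case_prod_conv mem_Collect_eq minus_diff_eq
        normal_add_subgroup_uminus)
  show "trans (coset_rel K)"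
  proof (rule transI)
    fix a b c assume "(a, b) \<in> coset_rel K" "(b, c) \<in> coset_rel K"
    then have "(a - b) + (b - c) \<in> K"
      unfolding coset_rel_def by (simp add: normal_add_subgroup_add)
    then show "(a, c) \<in> coset_rel K"
      unfolding coset_rel_def by (simp add: group_add_expand del: add_uminus_conv_diff)
  qed
qed

lemma coset_rel_add:
  assumes "(a, b) \<in> coset_rel K" "(c, d) \<in> coset_rel K"
  shows "(a + c, b + d) \<in> coset_rel K"
proof -
  have "a + (c - d) - a + (a - b) \<in> K"
    using assms unfolding coset_rel_def
    by (simp add: normal_add_subgroup_add normal_add_subgroup_conj del: add_uminus_conv_diff)
  moreover have "a + (c - d) - a + (a - b) = (a + c) - (b + d)"
    by (simp add: group_add_expand del: add_uminus_conv_diff)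
  ultimately show ?thesis
    unfolding coset_rel_def by simp
qed

end

lemma normal_add_subgroup_of_normal_subheap:
  assumes P: "normal_subheap T_tern P" and p: "p \<in> P"
  shows "normal_add_subgroup {x. x + p \<in> P}"
proof -
  have "T_tern (x + p) (y + p) p \<in> P" if "x + p \<in> P" "y + p \<in> P" for x y
    using P p that unfolding normal_subheap_def by blast
  moreover have "T_tern (x + p) (y + p) p = x - y + p" for x y
    by (simp add: T_tern_expand group_add_expand del: add_uminus_conv_diff)
  moreover have "T_tern (T_tern (g + p) p (k + p)) (g + p) p \<in> P" if "k + p \<in> P" for g k
    using P p that unfolding normal_subheap_def by blast
  moreover have "T_tern (T_tern (g + p) p (k + p)) (g + p) p = g + k - g + p" for g k
    by (simp add: T_tern_expand group_add_expand del: add_uminus_conv_diff)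
  ultimately show ?thesis
    unfolding normal_add_subgroup_def using p by auto
qed

lemma heap_sim_T_tern_iff:
  assumes K: "normal_add_subgroup K" and P: "P = {x. x - p \<in> K}"
  shows "heap_sim T_tern P a b \<longleftrightarrow> a - b \<in> K"
proof
  assume "heap_sim T_tern P a b"
  then obtain s where "a - b + s - p \<in> K" "s - p \<in> K"
    unfolding heap_sim_def T_tern_def P by auto
  then have "(a - b + s - p) - (s - p) \<in> K"
    by (rule normal_add_subgroup_diff[OF K])
  then show "a - b \<in> K"
    by (simp add: group_add_expand del: add_uminus_conv_diff)
next
  assume "a - b \<in> K"
  then have "T_tern a b p \<in> P"
    unfolding T_tern_def P by (simp add: add.assoc)
  moreover have "p \<in> P"
    using normal_add_subgroup_zero[OF K] P by simp
  ultimately show "heap_sim T_tern P a b"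
    unfolding heap_sim_def by blast
qed

lemma coset_rel_mult_of_closed_subheap:
  assumes closed: "\<And>a. closed_subheap T_tern (*) {b. a - b \<in> K}"
    and K: "normal_add_subgroup K" and "(s, s') \<in> coset_rel K"
  shows "(t * s, t * s') \<in> coset_rel K" and "(s * t, s' * t) \<in> coset_rel K"
proof -
  have "s \<in> {b. s - b \<in> K}" "s' \<in> {b. s - b \<in> K}"
    using assms(3) normal_add_subgroup_zero[OF K] unfolding coset_rel_def by simp_all
  then have "T_tern (t * s') (t * s) s \<in> {b. s - b \<in> K}"
    "T_tern (s' * t) (s * t) s \<in> {b. s - b \<in> K}"
    using closed[of s] unfolding closed_subheap_def by blast+
  moreover have "s - T_tern u v s = v - u" for u v
    by (simp add: T_tern_expand group_add_expand del: add_uminus_conv_diff)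
  ultimately show "(t * s, t * s') \<in> coset_rel K" "(s * t, s' * t) \<in> coset_rel K"
    unfolding coset_rel_def by simp_all
qed

lemma paragon_is_nr_congruence_class:
  assumes par: "paragon T_tern (*) P" and p: "p \<in> P"
  defines "K \<equiv> {x. x + p \<in> P}"
  shows "nr_congruence (coset_rel K)" and "P = coset_rel K `` {p}"
proof -
  have K: "normal_add_subgroup K"
    using par p normal_add_subgroup_of_normal_subheap unfolding paragon_def K_def by blast
  have P_eq: "P = {x. x - p \<in> K}"
    unfolding K_def by simp
  have "{b. heap_sim T_tern P a b} = {b. a - b \<in> K}" for a
    using heap_sim_T_tern_iff[OF K P_eq] by blast
  then have closed: "closed_subheap T_tern (*) {b. a - b \<in> K}" for a
    using par unfolding paragon_def by metis
  have "(a * c, b * d) \<in> coset_rel K"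
    if "(a, b) \<in> coset_rel K" "(c, d) \<in> coset_rel K" for a b c d
  proof -
    have "(a * c, a * d) \<in> coset_rel K" "(a * d, b * d) \<in> coset_rel K"
      using coset_rel_mult_of_closed_subheap[OF closed K] that by blast+
    then show ?thesis
      using equiv_coset_rel[OF K] unfolding equiv_def trans_def by blast
  qed
  then show "nr_congruence (coset_rel K)"
    unfolding nr_congruence_def using equiv_coset_rel[OF K] coset_rel_add[OF K] by blast
  show "P = coset_rel K `` {p}"
    using P_eq equiv_coset_rel[OF K] unfolding equiv_def sym_def coset_rel_def by blast
qed

theorem corollary3p15:
  fixes P :: "'a::near_ring set"
  shows "(\<exists>R. nr_congruence R \<and> P \<in> UNIV // R) \<longleftrightarrow> paragon T_tern (*) P"
proof
  assume "\<exists>R. nr_congruence R \<and> P \<in> UNIV // R"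
  then obtain R x where "nr_congruence R" "P = R `` {x}"
    unfolding quotient_def by blast
  then show "paragon T_tern (*) P"
    using paragon_nr_congruence_class by blast
next
  assume par: "paragon T_tern (*) P"
  then obtain p where p: "p \<in> P"
    unfolding paragon_def normal_subheap_def by blast
  let ?R = "coset_rel {x. x + p \<in> P}"
  have "nr_congruence ?R" "P = ?R `` {p}"
    using paragon_is_nr_congruence_class[OF par p] by simp_all
  then show "\<exists>R. nr_congruence R \<and> P \<in> UNIV // R"
    unfolding quotient_def by blast
qed

end
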